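(* Let $F$ be a digraph that is $\delta^+$-maderian and has the Erdős–Pósa Property. Then for every positive integer $k$, the digraph $k\times F$ is $\delta^+$-maderian.
   Context: A subdivision of a digraph $F$ is obtained by replacing each arc $(x,y)$ by a directed $(x,y)$-path, internally disjoint with new internal vertices. A digraph $F$ is $\delta^+$-maderian if there exists an integer $c$ such that every digraph with minimum out-degree at least $c$ contains a subdivision of $F$ as a subdigraph. $k\times F$ denotes the disjoint union of $k$ copies of $F$. $F$ has the Erdős–Pósa Property if for every positive integer $k$ there exists $\phi(k)$ such that every digraph $D$ either contains a subdivision of $k\times F$, or has a vertex set $S$ with $|S|\le\phi(k)$ such that $D-S$ contains no subdivision of $F$. *)

theory Defs
  imports Main
begin

definition digraph :: "'a set \<Rightarrow> ('a \<times> 'a) set \<Rightarrow> bool" where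
  "digraph V A \<longleftrightarrow> finite V \<and> A \<subseteq> V \<times> V \<and> (\<forall>x. (x, x) \<notin> A)"

definition dipath :: "('b \<times> 'b) set \<Rightarrow> 'b list \<Rightarrow> 'b \<Rightarrow> 'b \<Rightarrow> bool" where
  "dipath A P x y \<longleftrightarrow> distinct P \<and> 2 \<le> length P \<and> hd P = x \<and> last P = y \<and>
     (\<forall>i. Suc i < length P \<longrightarrow> (P ! i, P ! Suc i) \<in> A)"

definition interior :: "'b list \<Rightarrow> 'b set" where
  "interior P = set (butlast (tl P))"

definition contains_subdivision ::
  "'b set \<Rightarrow> ('b \<times> 'b) set \<Rightarrow> 'a set \<Rightarrow> ('a \<times> 'a) set \<Rightarrow> bool" where
  "contains_subdivision V A VF AF \<longleftrightarrow>
     (\<exists>(f :: 'a \<Rightarrow> 'b) (P :: 'a \<times> 'a \<Rightarrow> 'b list).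
        inj_on f VF \<and> f ` VF \<subseteq> V \<and>
        (\<forall>e\<in>AF. dipath A (P e) (f (fst e)) (f (snd e)) \<and> set (P e) \<subseteq> V) \<and>
        (\<forall>e\<in>AF. interior (P e) \<inter> f ` VF = {}) \<and>
        (\<forall>e\<in>AF. \<forall>e'\<in>AF. e \<noteq> e' \<longrightarrow> interior (P e) \<inter> interior (P e') = {}))"

definition outdeg :: "('b \<times> 'b) set \<Rightarrow> 'b \<Rightarrow> nat" where
  "outdeg A v = card {w. (v, w) \<in> A}"

text \<open>Host digraphs are taken on vertex type nat (every finite digraph is isomorphic
  to one on nat); digraphs are nonempty.\<close>
definition maderian :: "'a set \<Rightarrow> ('a \<times> 'a) set \<Rightarrow> bool" where
  "maderian VF AF \<longleftrightarrow>
     (\<exists>c::nat. \<forall>(V::nat set) A. digraph V A \<and> V \<noteq> {} \<and> (\<forall>v\<in>V. c \<le> outdeg A v)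
        \<longrightarrow> contains_subdivision V A VF AF)"

definition copiesV :: "nat \<Rightarrow> 'a set \<Rightarrow> ('a \<times> nat) set" where
  "copiesV k VF = VF \<times> {..<k}"

definition copiesA :: "nat \<Rightarrow> ('a \<times> 'a) set \<Rightarrow> (('a \<times> nat) \<times> ('a \<times> nat)) set" where
  "copiesA k AF = {((x, i), (y, i)) | x y i. (x, y) \<in> AF \<and> i < k}"

definition erdos_posa :: "'a set \<Rightarrow> ('a \<times> 'a) set \<Rightarrow> bool" where
  "erdos_posa VF AF \<longleftrightarrow>
     (\<forall>k::nat. 0 < k \<longrightarrow> (\<exists>phi::nat. \<forall>(V::nat set) A. digraph V A \<longrightarrow>
        contains_subdivision V A (copiesV k VF) (copiesA k AF) \<or>
        (\<exists>S\<subseteq>V. card S \<le> phi \<and>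
           \<not> contains_subdivision (V - S) (A \<inter> (V - S) \<times> (V - S)) VF AF)))"

end

theory Submission
  imports Defs
begin

text \<open>If a digraph D of huge minimum out-degree contains no subdivision of k \<times> F, the
  Erdos-Posa Property yields a set S of at most \<phi>(k) vertices such that D - S contains
  no subdivision of F. Deleting S lowers every out-degree by at most \<phi>(k), so with minimum
  out-degree c + \<phi>(k) + 1, where c witnesses that F is maderian, the digraph D - S is
  nonempty and has minimum out-degree at least c, hence contains a subdivision of F after all.\<close>

lemma digraph_minus_vertices:
  assumes "digraph V A"
  shows "digraph (V - S) (A \<inter> (V - S) \<times> (V - S))"
  using assms unfolding digraph_def by auto

lemma outdeg_le_card:
  assumes "digraph V A"
  shows "outdeg A v \<le> card V"
proof -
  have "{w. (v, w) \<in> A} \<subseteq> V" using assms unfolding digraph_def by auto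
  moreover have "finite V" using assms unfolding digraph_def by blast
  ultimately show ?thesis unfolding outdeg_def by (simp add: card_mono)
qed

lemma outdeg_minus_vertices:
  assumes "digraph V A" and "S \<subseteq> V" and "v \<in> V - S"
  shows "outdeg A v - card S \<le> outdeg (A \<inter> (V - S) \<times> (V - S)) v"
proof -
  have fin_V: "finite V" using assms(1) unfolding digraph_def by auto
  have "outdeg A v - card S \<le> card ({w. (v, w) \<in> A} - S)"
    unfolding outdeg_def using diff_card_le_card_Diff finite_subset[OF assms(2) fin_V] by blast
  also have "\<dots> \<le> outdeg (A \<inter> (V - S) \<times> (V - S)) v"
    unfolding outdeg_def
    by (rule card_mono[OF finite_subset[OF _ fin_V]]) (use assms in \<open>auto simp: digraph_def\<close>)
  finally show ?thesis .
qed

lemma min_outdeg_minus_vertices: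
  assumes "digraph V A" and "S \<subseteq> V" and "\<forall>v\<in>V. c + card S \<le> outdeg A v"
  shows "\<forall>v\<in>V - S. c \<le> outdeg (A \<inter> (V - S) \<times> (V - S)) v"
proof
  fix v assume "v \<in> V - S"
  then have "outdeg A v - card S \<le> outdeg (A \<inter> (V - S) \<times> (V - S)) v"
    and "c + card S \<le> outdeg A v"
    using outdeg_minus_vertices[OF assms(1,2)] assms(3) by auto
  then show "c \<le> outdeg (A \<inter> (V - S) \<times> (V - S)) v" by linarith
qed

lemma minus_vertices_nonempty:
  assumes "digraph V A" and "V \<noteq> {}" and "\<forall>v\<in>V. d \<le> outdeg A v"
    and "S \<subseteq> V" and "card S < d"
  shows "V - S \<noteq> {}"
proof
  assume "V - S = {}"
  with assms(4) have "S = V" by blast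
  obtain v where "v \<in> V" using assms(2) by blast
  then show False
    using assms(3,5) outdeg_le_card[OF assms(1), of v] \<open>S = V\<close> by fastforce
qed

theorem theorem8:
  fixes VF :: "'a set" and AF :: "('a \<times> 'a) set" and k :: nat
  assumes "digraph VF AF"
    and "maderian VF AF"
    and "erdos_posa VF AF"
    and "0 < k"
  shows "maderian (copiesV k VF) (copiesA k AF)"
proof -
  obtain c where c: "\<And>(V::nat set) A. digraph V A \<Longrightarrow> V \<noteq> {} \<Longrightarrow> \<forall>v\<in>V. c \<le> outdeg A v
      \<Longrightarrow> contains_subdivision V A VF AF"
    using assms(2) unfolding maderian_def by blast
  obtain phi where phi: "\<forall>(V::nat set) A. digraph V A \<longrightarrow>
        contains_subdivision V A (copiesV k VF) (copiesA k AF) \<or>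
        (\<exists>S\<subseteq>V. card S \<le> phi \<and>
           \<not> contains_subdivision (V - S) (A \<inter> (V - S) \<times> (V - S)) VF AF)"
    using assms(3)[unfolded erdos_posa_def, rule_format, OF assms(4)] ..
  have "contains_subdivision V A (copiesV k VF) (copiesA k AF)"
    if D: "digraph V A" "V \<noteq> {}" "\<forall>v\<in>V. c + phi + 1 \<le> outdeg A v" for V :: "nat set" and A
  proof (rule ccontr)
    assume "\<not> ?thesis"
    then obtain S where S: "S \<subseteq> V" "card S \<le> phi"
      and no_F: "\<not> contains_subdivision (V - S) (A \<inter> (V - S) \<times> (V - S)) VF AF"
      using phi D(1) by blast
    have "V - S \<noteq> {}"
      using minus_vertices_nonempty[OF D S(1)] S(2) by simp
    moreover have "\<forall>v\<in>V - S. c \<le> outdeg (A \<inter> (V - S) \<times> (V - S)) v"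
      using D(3) S(2) by (intro min_outdeg_minus_vertices[OF D(1) S(1)]) force
    ultimately show False
      using c[OF digraph_minus_vertices[OF D(1)]] no_F by blast
  qed
  then show ?thesis unfolding maderian_def by (intro exI[of _ "c + phi + 1"]) blast
qed

end
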